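(* In any finite ELP, for any policy $\pi$ (the conjugate policy), $Q^*\in\arg\min_{Q\in\mathcal Q}\max_{\lambda\ge0}\mathcal L_\pi(Q,\lambda)$. Equivalently, $Q^*$ is an optimal solution of the problem: minimize $\mathbb E_\pi[Q(S_T,A_T)]$ over $Q\in\mathcal Q$ subject to $Q(s,a)\ge\mathcal BQ(s,a)$ for all $(s,a)$.
   Context: A finite ELP is $(\mathcal S,\mathcal A,P,R,\rho)$ with finite $\mathcal S,\mathcal A$, reward $R:\mathcal S\to\mathbb R$, transitions $P(s'|s,a)$, distribution $\rho$, and nonempty terminal set $\mathcal S_\bot$. Under a policy $\pi$, $S_0$ is a fixed terminal state, $A_t\sim\pi(\cdot|S_t)$, $S_{t+1}\sim P(\cdot|S_t,A_t)$, and $T=\inf\{t\ge1:S_t\in\mathcal S_\bot\}$. ELP conditions: $\mathbb E_\pi[T]<\infty$ for every $\pi$; $P(s'|s,a)=\rho(s')$ for all $s\in\mathcal S_\bot$, all $a,s'$; every state is reachable under some policy. $\mathcal Q$ = all functions $\mathcal S\times\mathcal A\to\mathbb R$. $\gamma_{\mathrm{epi}}(s)=\mathbf 1[s\notin\mathcal S_\bot]$; the Bellman operator is $\mathcal BQ(s,a)=\sum_{s'}P(s'|s,a)\big(R(s')+\gamma_{\mathrm{epi}}(s')\max_{a'}Q(s',a')\big)$, and $Q^*$ is its unique fixed point. For a policy $\pi$, the Lagrangian is $\mathcal L_\pi(Q,\lambda)=\mathbb E_\pi[Q(S_T,A_T)]+\sum_{s,a}\lambda(s,a)\big(\mathcal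 BQ(s,a)-Q(s,a)\big)$ for $Q\in\mathcal Q$ and $\lambda:\mathcal S\times\mathcal A\to[0,\infty)$ (written $\lambda\ge0$), where $A_T\sim\pi(\cdot|S_T)$. *)

theory Defs
  imports Complex_Main "HOL-Library.Extended_Real"
begin

text \<open>P s a s' = P(s'|s,a), R : reward, rho : reset distribution, Term : terminal set,
  s0 : the fixed terminal start state. Policies are stochastic maps \<pi> s a = \<pi>(a|s).\<close>

definition is_dist :: "('b::finite \<Rightarrow> real) \<Rightarrow> bool" where
  "is_dist d \<longleftrightarrow> (\<forall>x. d x \<ge> 0) \<and> (\<Sum>x\<in>UNIV. d x) = 1"

definition is_policy :: "('s::finite \<Rightarrow> 'a::finite \<Rightarrow> real) \<Rightarrow> bool" where
  "is_policy \<pi> \<longleftrightarrow> (\<forall>s. is_dist (\<pi> s))"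

definition kernel :: "('s::finite \<Rightarrow> 'a::finite \<Rightarrow> 's \<Rightarrow> real) \<Rightarrow> ('s \<Rightarrow> 'a \<Rightarrow> real) \<Rightarrow> 's \<Rightarrow> 's \<Rightarrow> real" where
  "kernel P \<pi> s s' = (\<Sum>a\<in>UNIV. \<pi> s a * P s a s')"

fun state_dist :: "('s::finite \<Rightarrow> 'a::finite \<Rightarrow> 's \<Rightarrow> real) \<Rightarrow> ('s \<Rightarrow> 'a \<Rightarrow> real) \<Rightarrow> 's \<Rightarrow> nat \<Rightarrow> 's \<Rightarrow> real" where
  "state_dist P \<pi> s0 0 s = (if s = s0 then 1 else 0)"
| "state_dist P \<pi> s0 (Suc n) s' = (\<Sum>s\<in>UNIV. state_dist P \<pi> s0 n s * kernel P \<pi> s s')"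

text \<open>survive P pi Term s0 n s = Pr(S_n = s and T > n), where T = inf {t \<ge> 1. S_t \<in> Term}.\<close>
fun survive :: "('s::finite \<Rightarrow> 'a::finite \<Rightarrow> 's \<Rightarrow> real) \<Rightarrow> ('s \<Rightarrow> 'a \<Rightarrow> real) \<Rightarrow> 's set \<Rightarrow> 's \<Rightarrow> nat \<Rightarrow> 's \<Rightarrow> real" where
  "survive P \<pi> Term s0 0 s = (if s = s0 then 1 else 0)"
| "survive P \<pi> Term s0 (Suc n) s' =
     (if s' \<in> Term then 0 else (\<Sum>s\<in>UNIV. survive P \<pi> Term s0 n s * kernel P \<pi> s s'))"

text \<open>hit P pi Term s0 n s' = Pr(T = n+1 and S_T = s').\<close>
definition hit :: "('s::finite \<Rightarrow> 'a::finite \<Rightarrow> 's \<Rightarrow> real) \<Rightarrow> ('s \<Rightarrow> 'a \<Rightarrow> real) \<Rightarrow> 's set \<Rightarrow> 's \<Rightarrow> nat \<Rightarrow> 's \<Rightarrow> real" where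
  "hit P \<pi> Term s0 n s' =
     (if s' \<in> Term then (\<Sum>s\<in>UNIV. survive P \<pi> Term s0 n s * kernel P \<pi> s s') else 0)"

definition exit_dist :: "('s::finite \<Rightarrow> 'a::finite \<Rightarrow> 's \<Rightarrow> real) \<Rightarrow> ('s \<Rightarrow> 'a \<Rightarrow> real) \<Rightarrow> 's set \<Rightarrow> 's \<Rightarrow> 's \<Rightarrow> real" where
  "exit_dist P \<pi> Term s0 s = (\<Sum>n. hit P \<pi> Term s0 n s)"

text \<open>E_pi[T] < infinity, using E[T] = sum_{n \<ge> 0} Pr(T > n).\<close>
definition finite_expected_T :: "('s::finite \<Rightarrow> 'a::finite \<Rightarrow> 's \<Rightarrow> real) \<Rightarrow> ('s \<Rightarrow> 'a \<Rightarrow> real) \<Rightarrow> 's set \<Rightarrow> 's \<Rightarrow> bool" where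
  "finite_expected_T P \<pi> Term s0 \<longleftrightarrow> summable (\<lambda>n. \<Sum>s\<in>UNIV. survive P \<pi> Term s0 n s)"

definition is_ELP :: "('s::finite \<Rightarrow> 'a::finite \<Rightarrow> 's \<Rightarrow> real) \<Rightarrow> ('s \<Rightarrow> real) \<Rightarrow> 's set \<Rightarrow> 's \<Rightarrow> bool" where
  "is_ELP P rho Term s0 \<longleftrightarrow>
     (\<forall>s a. is_dist (P s a)) \<and> is_dist rho \<and> Term \<noteq> {} \<and> s0 \<in> Term \<and>
     (\<forall>\<pi>. is_policy \<pi> \<longrightarrow> finite_expected_T P \<pi> Term s0) \<and>
     (\<forall>s\<in>Term. \<forall>a s'. P s a s' = rho s') \<and>
     (\<forall>s. \<exists>\<pi> n. is_policy \<pi> \<and> state_dist P \<pi> s0 n s > 0)"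

definition gamma_epi :: "'s set \<Rightarrow> 's \<Rightarrow> real" where
  "gamma_epi Term s = (if s \<in> Term then 0 else 1)"

definition bellman :: "('s::finite \<Rightarrow> 'a::finite \<Rightarrow> 's \<Rightarrow> real) \<Rightarrow> ('s \<Rightarrow> real) \<Rightarrow> 's set
    \<Rightarrow> ('s \<Rightarrow> 'a \<Rightarrow> real) \<Rightarrow> 's \<Rightarrow> 'a \<Rightarrow> real" where
  "bellman P R Term Q s a =
     (\<Sum>s'\<in>UNIV. P s a s' * (R s' + gamma_epi Term s' * Max (range (Q s'))))"

text \<open>E_pi[Q(S_T, A_T)] with A_T ~ pi(.|S_T).\<close>
definition exit_value :: "('s::finite \<Rightarrow> 'a::finite \<Rightarrow> 's \<Rightarrow> real) \<Rightarrow> ('s \<Rightarrow> 'a \<Rightarrow> real) \<Rightarrow> 's set \<Rightarrow> 's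
    \<Rightarrow> ('s \<Rightarrow> 'a \<Rightarrow> real) \<Rightarrow> real" where
  "exit_value P \<pi> Term s0 Q = (\<Sum>s\<in>UNIV. exit_dist P \<pi> Term s0 s * (\<Sum>a\<in>UNIV. \<pi> s a * Q s a))"

definition lagrangian :: "('s::finite \<Rightarrow> 'a::finite \<Rightarrow> 's \<Rightarrow> real) \<Rightarrow> ('s \<Rightarrow> real) \<Rightarrow> 's set \<Rightarrow> 's
    \<Rightarrow> ('s \<Rightarrow> 'a \<Rightarrow> real) \<Rightarrow> ('s \<Rightarrow> 'a \<Rightarrow> real) \<Rightarrow> ('s \<Rightarrow> 'a \<Rightarrow> real) \<Rightarrow> real" where
  "lagrangian P R Term s0 \<pi> Q lam =
     exit_value P \<pi> Term s0 Q + (\<Sum>s\<in>UNIV. \<Sum>a\<in>UNIV. lam s a * (bellman P R Term Q s a - Q s a))"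

definition max_lagrangian :: "('s::finite \<Rightarrow> 'a::finite \<Rightarrow> 's \<Rightarrow> real) \<Rightarrow> ('s \<Rightarrow> real) \<Rightarrow> 's set \<Rightarrow> 's
    \<Rightarrow> ('s \<Rightarrow> 'a \<Rightarrow> real) \<Rightarrow> ('s \<Rightarrow> 'a \<Rightarrow> real) \<Rightarrow> ereal" where
  "max_lagrangian P R Term s0 \<pi> Q =
     (SUP lam\<in>{lam. \<forall>s a. lam s a \<ge> 0}. ereal (lagrangian P R Term s0 \<pi> Q lam))"

end

theory Submission
  imports Defs
begin

text \<open>
  The Lagrangian of \<open>Q\<^sup>*\<close> has zero Bellman residual, so its supremum over \<open>\<lambda> \<ge> 0\<close> is
  \<open>E\<^sub>\<pi>[Q\<^sup>*(S\<^sub>T,A\<^sub>T)]\<close>; for an infeasible \<open>Q\<close> the supremum is \<open>\<infinity>\<close>, and for a feasible \<open>Q\<close> it is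
  at least \<open>E\<^sub>\<pi>[Q(S\<^sub>T,A\<^sub>T)]\<close>. Everything therefore reduces to \<open>Q\<^sup>* \<le> Q\<close> for every
  \<open>Q \<ge> \<B>Q\<close>. The gap \<open>D = Q - Q\<^sup>*\<close> satisfies \<open>D(s,a) \<ge> \<Sum> P(s'|s,a) \<gamma>(s') D(s', g s')\<close> for a
  greedy selector \<open>g\<close> of \<open>Q\<^sup>*\<close>. If \<open>min D = m < 0\<close>, averaging forces every successor of a
  minimiser to be non-terminal with gap \<open>m\<close> at its greedy action, so the non-terminal states
  with \<open>D(s, g s) = m\<close> form a nonempty set that \<open>g\<close> never leaves. A policy that follows \<open>g\<close>
  there and otherwise reaches that set (every state is reachable, and terminal states reset
  the episode) keeps a fixed positive mass alive forever, contradicting \<open>E[T] < \<infinity>\<close>.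
\<close>

lemma is_dist_ex_pos:
  assumes "is_dist d"
  obtains x where "0 < d x"
proof -
  have "\<not> (\<forall>x. d x \<le> 0)"
    using assms sum_nonpos[of UNIV d] unfolding is_dist_def by auto
  then show ?thesis using that by (auto simp: not_le)
qed

lemma is_dist_average_eq_min:
  assumes d: "is_dist d" and ge: "\<And>x. m \<le> f x"
    and avg: "(\<Sum>x\<in>UNIV. d x * f x) \<le> m" and pos: "0 < d x"
  shows "f x = m"
proof -
  have nonneg: "0 \<le> d y * (f y - m)" for y
    using d ge[of y] unfolding is_dist_def by simp
  have "(\<Sum>y\<in>UNIV. d y * (f y - m)) = (\<Sum>y\<in>UNIV. d y * f y) - m * (\<Sum>y\<in>UNIV. d y)"
    by (simp add: algebra_simps sum_subtractf sum_distrib_left)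
  also have "\<dots> \<le> 0" using d avg unfolding is_dist_def by simp
  finally have "(\<Sum>y\<in>UNIV. d y * (f y - m)) \<le> 0" .
  then have "(\<Sum>y\<in>UNIV. d y * (f y - m)) = 0"
    using nonneg by (meson antisym sum_nonneg)
  then have "d x * (f x - m) = 0"
    using nonneg by (simp add: sum_nonneg_eq_0_iff)
  then show ?thesis using pos by simp
qed

lemma kernel_nonneg:
  assumes "\<forall>s a. is_dist (P s a)" "is_policy \<pi>"
  shows "0 \<le> kernel P \<pi> s s'"
  using assms unfolding kernel_def is_policy_def is_dist_def
  by (intro sum_nonneg mult_nonneg_nonneg) auto

lemma kernel_sum_eq_one:
  assumes "\<forall>s a. is_dist (P s a)" "is_policy \<pi>"
  shows "(\<Sum>s'\<in>UNIV. kernel P \<pi> s s') = 1"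
proof -
  have "(\<Sum>s'\<in>UNIV. kernel P \<pi> s s') = (\<Sum>a\<in>UNIV. \<pi> s a * (\<Sum>s'\<in>UNIV. P s a s'))"
    unfolding kernel_def by (subst sum.swap) (simp add: sum_distrib_left)
  then show ?thesis using assms unfolding is_policy_def is_dist_def by simp
qed

lemma kernel_le_one:
  assumes "\<forall>s a. is_dist (P s a)" "is_policy \<pi>"
  shows "kernel P \<pi> s s' \<le> 1"
  using member_le_sum[of s' UNIV "kernel P \<pi> s"] kernel_nonneg[OF assms] kernel_sum_eq_one[OF assms]
  by auto

lemma kernel_terminal:
  assumes "is_policy \<pi>" "\<forall>s\<in>Term. \<forall>a s'. P s a s' = rho s'" "s \<in> Term"
  shows "kernel P \<pi> s s' = rho s'"
proof -
  have "kernel P \<pi> s s' = (\<Sum>a\<in>UNIV. \<pi> s a) * rho s'"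
    unfolding kernel_def using assms by (simp add: sum_distrib_right)
  then show ?thesis using assms unfolding is_policy_def is_dist_def by simp
qed

lemma kernel_cong: "\<pi> s = \<pi>' s \<Longrightarrow> kernel P \<pi> s s' = kernel P \<pi>' s s'"
  unfolding kernel_def by simp

lemma survive_nonneg:
  assumes "\<forall>s a. is_dist (P s a)" "is_policy \<pi>"
  shows "0 \<le> survive P \<pi> Term s0 n s"
  by (induction n arbitrary: s)
     (auto intro!: sum_nonneg mult_nonneg_nonneg kernel_nonneg[OF assms])

lemma state_dist_nonneg:
  assumes "\<forall>s a. is_dist (P s a)" "is_policy \<pi>"
  shows "0 \<le> state_dist P \<pi> s0 n s"
  by (induction n arbitrary: s)
     (auto intro!: sum_nonneg mult_nonneg_nonneg kernel_nonneg[OF assms])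

lemma hit_nonneg:
  assumes "\<forall>s a. is_dist (P s a)" "is_policy \<pi>"
  shows "0 \<le> hit P \<pi> Term s0 n s"
  unfolding hit_def
  by (auto intro!: sum_nonneg mult_nonneg_nonneg kernel_nonneg[OF assms] survive_nonneg[OF assms])

lemma hit_le_survive_mass:
  assumes "\<forall>s a. is_dist (P s a)" "is_policy \<pi>"
  shows "hit P \<pi> Term s0 n s' \<le> (\<Sum>s\<in>UNIV. survive P \<pi> Term s0 n s)"
  unfolding hit_def
  using survive_nonneg[OF assms] kernel_le_one[OF assms] kernel_nonneg[OF assms]
  by (auto intro!: sum_mono sum_nonneg mult_right_le_one_le)

lemma exit_dist_nonneg:
  assumes Pd: "\<forall>s a. is_dist (P s a)" and pol: "is_policy \<pi>"
    and fin: "finite_expected_T P \<pi> Term s0"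
  shows "0 \<le> exit_dist P \<pi> Term s0 s"
proof -
  have "summable (\<lambda>n. hit P \<pi> Term s0 n s)"
    using fin unfolding finite_expected_T_def
    by (rule summable_comparison_test[rotated])
       (use hit_nonneg[OF Pd pol] hit_le_survive_mass[OF Pd pol] in auto)
  then show ?thesis unfolding exit_dist_def
    by (intro suminf_nonneg) (use hit_nonneg[OF Pd pol] in auto)
qed

lemma exit_value_mono:
  assumes "\<forall>s a. is_dist (P s a)" "is_policy \<pi>" "finite_expected_T P \<pi> Term s0"
    and "\<And>s a. Q s a \<le> Q' s a"
  shows "exit_value P \<pi> Term s0 Q \<le> exit_value P \<pi> Term s0 Q'"
  unfolding exit_value_def
  using assms exit_dist_nonneg[OF assms(1-3)] unfolding is_policy_def is_dist_def
  by (intro sum_mono mult_left_mono) auto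

lemma survive_mass_incseq_closed:
  assumes Pd: "\<forall>s a. is_dist (P s a)" and pol: "is_policy h"
    and nonterm: "M \<inter> Term = {}"
    and closed: "\<And>s s'. s \<in> M \<Longrightarrow> 0 < kernel P h s s' \<Longrightarrow> s' \<in> M"
  shows "incseq (\<lambda>n. \<Sum>s\<in>M. survive P h Term s0 n s)"
proof (rule incseq_SucI)
  fix n
  have stay: "(\<Sum>s'\<in>M. kernel P h s s') = 1" if "s \<in> M" for s
  proof -
    have "(\<Sum>s'\<in>M. kernel P h s s') = (\<Sum>s'\<in>UNIV. kernel P h s s')"
      using closed[OF that] kernel_nonneg[OF Pd pol]
      by (intro sum.mono_neutral_left) (auto simp: less_le)
    then show ?thesis using kernel_sum_eq_one[OF Pd pol] by simp
  qed
  have "(\<Sum>s\<in>M. survive P h Term s0 n s)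
      = (\<Sum>s\<in>M. survive P h Term s0 n s * (\<Sum>s'\<in>M. kernel P h s s'))"
    using stay by simp
  also have "\<dots> = (\<Sum>s'\<in>M. \<Sum>s\<in>M. survive P h Term s0 n s * kernel P h s s')"
    by (subst sum.swap) (simp add: sum_distrib_left)
  also have "\<dots> \<le> (\<Sum>s'\<in>M. \<Sum>s\<in>UNIV. survive P h Term s0 n s * kernel P h s s')"
    using survive_nonneg[OF Pd pol] kernel_nonneg[OF Pd pol] by (intro sum_mono sum_mono2) auto
  also have "\<dots> = (\<Sum>s'\<in>M. survive P h Term s0 (Suc n) s')"
    using nonterm by (intro sum.cong) auto
  finally show "(\<Sum>s\<in>M. survive P h Term s0 n s) \<le> (\<Sum>s\<in>M. survive P h Term s0 (Suc n) s)" .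
qed

lemma survive_closed_eq_zero:
  assumes Pd: "\<forall>s a. is_dist (P s a)" and pol: "is_policy h"
    and fin: "finite_expected_T P h Term s0"
    and nonterm: "M \<inter> Term = {}"
    and closed: "\<And>s s'. s \<in> M \<Longrightarrow> 0 < kernel P h s s' \<Longrightarrow> s' \<in> M"
    and "s \<in> M"
  shows "survive P h Term s0 n s = 0"
proof -
  let ?u = "\<lambda>n. \<Sum>s\<in>M. survive P h Term s0 n s"
  have inc: "incseq ?u" by (rule survive_mass_incseq_closed[OF Pd pol nonterm closed])
  have le_mass: "?u m \<le> (\<Sum>s\<in>UNIV. survive P h Term s0 m s)" for m
    using survive_nonneg[OF Pd pol] by (intro sum_mono2) auto
  have "?u n \<le> 0"
  proof (rule LIMSEQ_le_const)
    show "(\<lambda>m. \<Sum>s\<in>UNIV. survive P h Term s0 m s) \<longlonglongrightarrow> 0"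
      using fin unfolding finite_expected_T_def by (rule summable_LIMSEQ_zero)
    show "\<exists>N. \<forall>m\<ge>N. ?u n \<le> (\<Sum>s\<in>UNIV. survive P h Term s0 m s)"
      using incseqD[OF inc] le_mass order_trans by blast
  qed
  moreover have "survive P h Term s0 n s \<le> ?u n"
    using \<open>s \<in> M\<close> survive_nonneg[OF Pd pol] by (intro member_le_sum) auto
  ultimately show ?thesis using survive_nonneg[OF Pd pol, of Term s0 n s] by linarith
qed

text \<open>Terminal states reset the chain exactly as \<open>s0\<close> does, so survival under \<open>h\<close> restarts
  wherever \<open>\<pi>'\<close> passes through a terminal state.\<close>

lemma state_dist_pos_survive_pos:
  assumes Pd: "\<forall>s a. is_dist (P s a)" and pol': "is_policy \<pi>'" and pol: "is_policy h"
    and s0T: "s0 \<in> Term" and reset: "\<forall>s\<in>Term. \<forall>a s'. P s a s' = rho s'"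
    and agree: "\<And>s. s \<notin> M \<Longrightarrow> h s = \<pi>' s"
    and "0 < state_dist P \<pi>' s0 n s'"
  shows "s' \<in> Term \<or> (\<exists>N. 0 < survive P h Term s0 N s')
    \<or> (\<exists>N. \<exists>s\<in>M. 0 < survive P h Term s0 N s)"
  using \<open>0 < state_dist P \<pi>' s0 n s'\<close>
proof (induction n arbitrary: s')
  case 0
  then show ?case using s0T by (simp split: if_splits)
next
  case (Suc n)
  show ?case
  proof (cases "s' \<in> Term")
    case s'T: False
    have "\<not> (\<forall>s. state_dist P \<pi>' s0 n s * kernel P \<pi>' s s' \<le> 0)"
    proof
      assume "\<forall>s. state_dist P \<pi>' s0 n s * kernel P \<pi>' s s' \<le> 0"
      then have "state_dist P \<pi>' s0 (Suc n) s' \<le> 0" by (simp add: sum_nonpos)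
      with Suc.prems show False by simp
    qed
    then obtain s where "0 < state_dist P \<pi>' s0 n s * kernel P \<pi>' s s'" by (auto simp: not_le)
    then have sd: "0 < state_dist P \<pi>' s0 n s" and kp: "0 < kernel P \<pi>' s s'"
      using state_dist_nonneg[OF Pd pol', of s0 n s] kernel_nonneg[OF Pd pol', of s s']
      by (auto simp: zero_less_mult_iff)
    consider "s \<in> Term" | N where "0 < survive P h Term s0 N s" "s \<notin> M"
      | "\<exists>N. \<exists>s\<in>M. 0 < survive P h Term s0 N s"
      using Suc.IH[OF sd] by blast
    then show ?thesis
    proof cases
      case 1
      have "survive P h Term s0 (Suc 0) s' = kernel P h s0 s'"
        using s'T by (simp add: if_distrib if_distribR cong: if_cong)
      also have "\<dots> = kernel P \<pi>' s s'"
        using kernel_terminal[OF pol reset s0T] kernel_terminal[OF pol' reset 1] by simp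
      finally have "0 < survive P h Term s0 (Suc 0) s'" using kp by simp
      then show ?thesis by blast
    next
      case (2 N)
      have "survive P h Term s0 N s * kernel P h s s' \<le> survive P h Term s0 (Suc N) s'"
        using s'T survive_nonneg[OF Pd pol] kernel_nonneg[OF Pd pol]
        by (simp, intro member_le_sum) auto
      moreover have "kernel P h s s' = kernel P \<pi>' s s'"
        using agree[OF \<open>s \<notin> M\<close>] by (rule kernel_cong)
      ultimately have "0 < survive P h Term s0 (Suc N) s'"
        using 2 kp by (metis mult_pos_pos less_le_trans)
      then show ?thesis by blast
    next
      case 3
      then show ?thesis by blast
    qed
  next
    case True
    then show ?thesis by blast
  qed
qed

lemma is_ELP_no_closed_nonterminal_set:
  assumes elp: "is_ELP P rho Term s0" and nonterm: "M \<inter> Term = {}"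
    and closed: "\<And>s s'. s \<in> M \<Longrightarrow> 0 < P s (g s) s' \<Longrightarrow> s' \<in> M"
  shows "M = {}"
proof (rule ccontr)
  assume "M \<noteq> {}"
  then obtain sM where sM: "sM \<in> M" by blast
  from elp have Pd: "\<forall>s a. is_dist (P s a)" and s0T: "s0 \<in> Term"
    and fin: "\<And>\<pi>. is_policy \<pi> \<Longrightarrow> finite_expected_T P \<pi> Term s0"
    and reset: "\<forall>s\<in>Term. \<forall>a s'. P s a s' = rho s'"
    unfolding is_ELP_def by auto
  obtain \<pi>' n where pol': "is_policy \<pi>'" and reach: "0 < state_dist P \<pi>' s0 n sM"
    using elp unfolding is_ELP_def by blast
  define h where "h s = (if s \<in> M then (\<lambda>a. if a = g s then 1 else 0) else \<pi>' s)" for s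
  have pol: "is_policy h"
    using pol' unfolding is_policy_def is_dist_def h_def by auto
  have "kernel P h s s' = P s (g s) s'" if "s \<in> M" for s s'
    using that unfolding kernel_def h_def by (simp add: if_distrib if_distribR cong: if_cong)
  then have dead: "survive P h Term s0 N s = 0" if "s \<in> M" for N s
    using survive_closed_eq_zero[OF Pd pol fin[OF pol] nonterm _ that] closed by metis
  have "sM \<in> Term \<or> (\<exists>N. 0 < survive P h Term s0 N sM) \<or> (\<exists>N. \<exists>s\<in>M. 0 < survive P h Term s0 N s)"
    by (rule state_dist_pos_survive_pos[OF Pd pol' pol s0T reset _ reach]) (simp add: h_def)
  then show False using sM nonterm dead by auto
qed

lemma bellman_supersolution_gap:
  assumes Pnn: "\<And>s a s'. 0 \<le> P s a s'"
    and fixpt: "bellman P R Term Qstar = Qstar"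
    and feas: "\<forall>s a. bellman P R Term Q s a \<le> Q s a"
    and greedy: "\<And>s. Qstar s (g s) = Max (range (Qstar s))"
  shows "(\<Sum>s'\<in>UNIV. P s a s' * (gamma_epi Term s' * (Q s' (g s') - Qstar s' (g s'))))
    \<le> Q s a - Qstar s a"
proof -
  have gam: "0 \<le> gamma_epi Term s'" for s' unfolding gamma_epi_def by simp
  have "(\<Sum>s'\<in>UNIV. P s a s' * (R s' + gamma_epi Term s' * Q s' (g s'))) \<le> bellman P R Term Q s a"
    unfolding bellman_def
    by (intro sum_mono mult_left_mono add_left_mono mult_left_mono[OF _ gam] Pnn Max_ge) auto
  also have "\<dots> \<le> Q s a" using feas by simp
  finally have "(\<Sum>s'\<in>UNIV. P s a s' * (R s' + gamma_epi Term s' * Q s' (g s'))) \<le> Q s a" .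
  moreover have "Qstar s a = (\<Sum>s'\<in>UNIV. P s a s' * (R s' + gamma_epi Term s' * Qstar s' (g s')))"
    using fun_cong[OF fun_cong[OF fixpt, of s], of a] unfolding bellman_def greedy by simp
  moreover have "(\<Sum>s'\<in>UNIV. P s a s' * (gamma_epi Term s' * (Q s' (g s') - Qstar s' (g s'))))
      = (\<Sum>s'\<in>UNIV. P s a s' * (R s' + gamma_epi Term s' * Q s' (g s')))
      - (\<Sum>s'\<in>UNIV. P s a s' * (R s' + gamma_epi Term s' * Qstar s' (g s')))"
    by (simp add: sum_subtractf[symmetric] algebra_simps)
  ultimately show ?thesis by linarith
qed

lemma bellman_fixpoint_le_supersolution:
  assumes elp: "is_ELP P rho Term s0"
    and fixpt: "bellman P R Term Qstar = Qstar"
    and feas: "\<forall>s a. bellman P R Term Q s a \<le> Q s a"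
  shows "Qstar s a \<le> Q s a"
proof -
  have Pd: "\<forall>s a. is_dist (P s a)" using elp unfolding is_ELP_def by simp
  have "\<forall>s. \<exists>a. Qstar s a = Max (range (Qstar s))"
  proof
    fix s
    have "Max (range (Qstar s)) \<in> range (Qstar s)" by (intro Max_in) auto
    then show "\<exists>a. Qstar s a = Max (range (Qstar s))" by (metis imageE)
  qed
  then obtain g where greedy: "\<And>s. Qstar s (g s) = Max (range (Qstar s))" by metis
  define D where "D s a = Q s a - Qstar s a" for s a
  define m where "m = Min (range (case_prod D))"
  have m_le: "m \<le> D s a" for s a unfolding m_def by (rule Min_le) auto
  have "m \<in> range (case_prod D)" unfolding m_def by (intro Min_in) auto
  then obtain s1 a1 where s1: "D s1 a1 = m" by auto
  have "0 \<le> m"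
  proof (rule ccontr)
    assume "\<not> 0 \<le> m"
    have succ: "s' \<notin> Term \<and> D s' (g s') = m" if "D s a = m" and "0 < P s a s'" for s a s'
    proof -
      have "gamma_epi Term s' * D s' (g s') = m"
      proof (rule is_dist_average_eq_min[of "P s a"])
        show "is_dist (P s a)" using Pd by simp
        show "m \<le> gamma_epi Term x * D x (g x)" for x
          using \<open>\<not> 0 \<le> m\<close> m_le[of x "g x"] by (simp add: gamma_epi_def)
        have "\<And>s a s'. 0 \<le> P s a s'" using Pd unfolding is_dist_def by blast
        then show "(\<Sum>x\<in>UNIV. P s a x * (gamma_epi Term x * D x (g x))) \<le> m"
          using bellman_supersolution_gap[OF _ fixpt feas greedy, of s a] \<open>D s a = m\<close>
          unfolding D_def by simp
        show "0 < P s a s'" by fact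
      qed
      then show ?thesis using \<open>\<not> 0 \<le> m\<close> by (simp add: gamma_epi_def split: if_splits)
    qed
    let ?M = "{s. s \<notin> Term \<and> D s (g s) = m}"
    have "?M = {}"
    proof (rule is_ELP_no_closed_nonterminal_set[OF elp])
      show "?M \<inter> Term = {}" by blast
      show "s' \<in> ?M" if "s \<in> ?M" and "0 < P s (g s) s'" for s s'
        using succ[of s "g s" s'] that by simp
    qed
    moreover obtain s' where "0 < P s1 a1 s'"
      using is_dist_ex_pos Pd by blast
    ultimately show False using succ[OF s1] by blast
  qed
  then show ?thesis using m_le[of s a] unfolding D_def by simp
qed

lemma max_lagrangian_ge_exit_value:
  "ereal (exit_value P \<pi> Term s0 Q) \<le> max_lagrangian P R Term s0 \<pi> Q"
proof -
  have "ereal (lagrangian P R Term s0 \<pi> Q (\<lambda>_ _. 0)) \<le> max_lagrangian P R Term s0 \<pi> Q"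
    unfolding max_lagrangian_def by (rule SUP_upper) auto
  then show ?thesis unfolding lagrangian_def by simp
qed

lemma max_lagrangian_fixpoint:
  assumes "bellman P R Term Q = Q"
  shows "max_lagrangian P R Term s0 \<pi> Q = ereal (exit_value P \<pi> Term s0 Q)"
proof (rule antisym)
  show "max_lagrangian P R Term s0 \<pi> Q \<le> ereal (exit_value P \<pi> Term s0 Q)"
    unfolding max_lagrangian_def lagrangian_def assms by (intro SUP_least) simp
qed (rule max_lagrangian_ge_exit_value)

lemma max_lagrangian_infeasible:
  assumes "Q s1 a1 < bellman P R Term Q s1 a1"
  shows "max_lagrangian P R Term s0 \<pi> Q = \<infinity>"
proof (rule ereal_top)
  fix B :: real
  define \<delta> where "\<delta> = bellman P R Term Q s1 a1 - Q s1 a1"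
  define t where "t = max 0 ((B - exit_value P \<pi> Term s0 Q) / \<delta>)"
  define lam where "lam s a = (if s = s1 then if a = a1 then t else 0 else 0)" for s a
  have "0 < \<delta>" using assms unfolding \<delta>_def by simp
  then have "B - exit_value P \<pi> Term s0 Q = (B - exit_value P \<pi> Term s0 Q) / \<delta> * \<delta>" by simp
  also have "\<dots> \<le> t * \<delta>" unfolding t_def using \<open>0 < \<delta>\<close> by (intro mult_right_mono) auto
  also have "t * \<delta> = (\<Sum>s\<in>UNIV. \<Sum>a\<in>UNIV. lam s a * (bellman P R Term Q s a - Q s a))"
  proof -
    have "lam s a * (bellman P R Term Q s a - Q s a) = (if a = a1 then if s = s1 then t * \<delta> else 0 else 0)"
      for s a by (simp add: lam_def \<delta>_def)
    then show ?thesis by simp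
  qed
  finally have "ereal B \<le> ereal (lagrangian P R Term s0 \<pi> Q lam)" unfolding lagrangian_def by simp
  also have "\<dots> \<le> max_lagrangian P R Term s0 \<pi> Q"
    unfolding max_lagrangian_def by (rule SUP_upper) (simp add: lam_def t_def)
  finally show "ereal B \<le> max_lagrangian P R Term s0 \<pi> Q" .
qed

theorem mainTheorem4:
  fixes P :: "'s::finite \<Rightarrow> 'a::finite \<Rightarrow> 's \<Rightarrow> real"
    and R :: "'s \<Rightarrow> real" and rho :: "'s \<Rightarrow> real" and Term :: "'s set" and s0 :: 's
    and \<pi> :: "'s \<Rightarrow> 'a \<Rightarrow> real" and Qstar :: "'s \<Rightarrow> 'a \<Rightarrow> real"
  assumes elp: "is_ELP P rho Term s0"
    and pol: "is_policy \<pi>"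
    and fixpt: "bellman P R Term Qstar = Qstar"
  shows "(\<forall>Q. max_lagrangian P R Term s0 \<pi> Qstar \<le> max_lagrangian P R Term s0 \<pi> Q)
    \<and> (\<forall>s a. Qstar s a \<ge> bellman P R Term Qstar s a)
    \<and> (\<forall>Q. (\<forall>s a. Q s a \<ge> bellman P R Term Q s a) \<longrightarrow>
           exit_value P \<pi> Term s0 Qstar \<le> exit_value P \<pi> Term s0 Q)"
proof -
  have optimal: "exit_value P \<pi> Term s0 Qstar \<le> exit_value P \<pi> Term s0 Q"
    if feas: "\<forall>s a. bellman P R Term Q s a \<le> Q s a" for Q
    using elp pol bellman_fixpoint_le_supersolution[OF elp fixpt feas]
    by (intro exit_value_mono) (auto simp: is_ELP_def)
  have "max_lagrangian P R Term s0 \<pi> Qstar \<le> max_lagrangian P R Term s0 \<pi> Q" for Q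
  proof (cases "\<forall>s a. bellman P R Term Q s a \<le> Q s a")
    case True
    have "max_lagrangian P R Term s0 \<pi> Qstar = ereal (exit_value P \<pi> Term s0 Qstar)"
      by (rule max_lagrangian_fixpoint[OF fixpt])
    also have "\<dots> \<le> ereal (exit_value P \<pi> Term s0 Q)" using optimal[OF True] by simp
    also have "\<dots> \<le> max_lagrangian P R Term s0 \<pi> Q" by (rule max_lagrangian_ge_exit_value)
    finally show ?thesis .
  next
    case False
    then obtain s a where "Q s a < bellman P R Term Q s a" by (auto simp: not_le)
    then show ?thesis by (simp add: max_lagrangian_infeasible)
  qed
  then show ?thesis using optimal fixpt by auto
qed

end
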